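(* Let $V$ be a finite set, $A\subseteq V$, $i\in V$, and $t_i,\lambda\in\mathbb{C}$. Then (a) $\int d\psi_i\,d\bar\psi_i\,e^{t_i\bar\psi_i\psi_i}\,\tau_A=\tau_{A\setminus\{i\}}$ if $i\in A$, and $=t_i\tau_A$ if $i\notin A$; (b) $\int d\psi_i\,d\bar\psi_i\,e^{t_i\bar\psi_i\psi_i}\,f_A^{(\lambda)}=f_{A\setminus\{i\}}^{(\lambda)}+(t_i-\lambda)\tau_{A\setminus\{i\}}$ if $i\in A$, and $=t_if_A^{(\lambda)}$ if $i\notin A$.
   Context: For each $i\in V$ let $\psi_i,\bar\psi_i$ be anticommuting generators of a Grassmann algebra over $\mathbb{C}$; $\tau_A=\prod_{j\in A}\bar\psi_j\psi_j$ ($\tau_\emptyset=1$); $f_A^{(\lambda)}=\lambda(1-|A|)\tau_A+\sum_{j\in A}\tau_{A\setminus\{j\}}-\sum_{j,k\in A,\ j\neq k}\bar\psi_j\psi_k\,\tau_{A\setminus\{j,k\}}$ (with $f_\emptyset^{(\lambda)}=\lambda$). Berezin integration over the pair at $i$: $\int d\psi_i\,d\bar\psi_i$ is linear over the subalgebra generated by the other variables, with $\int d\psi_i\,d\bar\psi_i\,\bar\psi_i\psi_i=1$ and $\int d\psi_i\,d\bar\psi_i$ of $1,\psi_i,\bar\psi_i$ equal to $0$. *)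

theory Defs
  imports Complex_Main "HOL-Library.Function_Algebras"
begin

text \<open>Grassmann algebra over the complex numbers with generators psi_i = gen (i,False)
and psibar_i = gen (i,True), for i of a linearly ordered type.  An element is the
coefficient function on finite sets of generators; the set U stands for the ordered
monomial (product of the generators in U in increasing order w.r.t. gless).\<close>

type_synonym 'a grass = "('a \<times> bool) set \<Rightarrow> complex"

fun gless :: "'a::linorder \<times> bool \<Rightarrow> 'a \<times> bool \<Rightarrow> bool" where
  "gless (i, b) (j, c) = (i < j \<or> (i = j \<and> \<not> b \<and> c))"

text \<open>sign of the permutation sorting the concatenation of the ordered words S and T\<close>
definition gsign :: "('a::linorder \<times> bool) set \<Rightarrow> ('a \<times> bool) set \<Rightarrow> complex" where
  "gsign S T = (-1) ^ card {(s, t). s \<in> S \<and> t \<in> T \<and> gless t s}"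

definition gmul :: "'a::linorder grass \<Rightarrow> 'a grass \<Rightarrow> 'a grass" where
  "gmul f g = (\<lambda>U. if finite U then (\<Sum>S\<in>Pow U. gsign S (U - S) * f S * g (U - S)) else 0)"

definition smult :: "complex \<Rightarrow> 'a grass \<Rightarrow> 'a grass" where
  "smult c f = (\<lambda>U. c * f U)"

definition mono :: "('a \<times> bool) set \<Rightarrow> 'a grass" where
  "mono W = (\<lambda>U. if U = W then 1 else 0)"

definition gone :: "'a grass" where
  "gone = mono {}"

definition psi :: "'a \<Rightarrow> 'a grass" where
  "psi i = mono {(i, False)}"

definition psibar :: "'a \<Rightarrow> 'a grass" where
  "psibar i = mono {(i, True)}"

definition gpow :: "'a::linorder grass \<Rightarrow> nat \<Rightarrow> 'a grass" where
  "gpow x k = ((gmul x) ^^ k) gone"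

definition gens :: "'a grass \<Rightarrow> ('a \<times> bool) set" where
  "gens x = \<Union>{S. x S \<noteq> 0}"

text \<open>exponential: exp(body) times the (finite) exponential series of the nilpotent part
(which vanishes beyond degree card (gens x) for finitely supported x)\<close>
definition gexp :: "'a::linorder grass \<Rightarrow> 'a grass" where
  "gexp x = smult (exp (x {}))
     (\<Sum>k\<le>card (gens x). smult (1 / of_nat (fact k)) (gpow (x({} := 0)) k))"

text \<open>Berezin integral over the pair at i: write F = a + b psi_i + c psibar_i + d psibar_i psi_i
with a,b,c,d not involving the i-generators; the result is d.  The coefficient of d on
the monomial W is obtained by comparing mono (W + pair) with mono W * psibar_i psi_i.\<close>
definition berezin :: "'a::linorder \<Rightarrow> 'a grass \<Rightarrow> 'a grass" where
  "berezin i F = (\<lambda>W. if (i, False) \<in> W \<or> (i, True) \<in> W then 0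
     else gmul (mono W) (gmul (psibar i) (psi i)) (W \<union> {(i, False), (i, True)})
          * F (W \<union> {(i, False), (i, True)}))"

definition tau :: "'a::linorder set \<Rightarrow> 'a grass" where
  "tau A = foldr (\<lambda>j acc. gmul (gmul (psibar j) (psi j)) acc) (sorted_list_of_set A) gone"

definition fA :: "complex \<Rightarrow> 'a::linorder set \<Rightarrow> 'a grass" where
  "fA lam A = smult (lam * (1 - of_nat (card A))) (tau A)
     + (\<Sum>j\<in>A. tau (A - {j}))
     - (\<Sum>(j, k)\<in>{(j, k). j \<in> A \<and> k \<in> A \<and> j \<noteq> k}.
          gmul (gmul (psibar j) (psi k)) (tau (A - {j, k})))"

end

theory Submission imports Defs begin

text \<open>As \<open>(psibar_i psi_i)^2 = 0\<close>, the exponential is \<open>1 + t psibar_i psi_i\<close>, and integrating out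
the pair at \<open>i\<close> against it is a linear map with a closed form on coefficients: a monomial \<open>W\<close>
free of the pair receives \<open>t F(W) - F(W \<union> {psi_i, psibar_i})\<close> (the sign because the ordered
monomial is \<open>psi_i psibar_i\<close>).  Both \<open>tau_B\<close> and \<open>psibar_j psi_k tau_B\<close> are signed monomials in which
the pair at \<open>i\<close> commutes with everything, so the map sends \<open>tau_B\<close> to \<open>tau_(B - {i})\<close> or to
\<open>t tau_B\<close>, and kills the terms of \<open>f_A\<close> containing only one generator of the pair.  Part (b)
follows by linearity: the summand \<open>j = i\<close> of the single sum contributes \<open>t tau_(A - {i})\<close>, and
the drop of \<open>|A|\<close> by one in \<open>lam (1 - |A|)\<close> accounts for the \<open>- lam tau_(A - {i})\<close>.\<close>

lemma sum_fun_apply: "(\<Sum>x\<in>S. f x) W = (\<Sum>x\<in>S. f x W :: 'b::comm_monoid_add)"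
  by (induction S rule: infinite_finite_induct) auto

lemma smult_smult: "smult a (smult b f) = smult (a * b) f"
  by (simp add: smult_def mult.assoc)

lemma smult_add: "smult c (f + g) = smult c f + smult c g"
  by (auto simp: smult_def algebra_simps intro!: ext)

lemma smult_diff: "smult c (f - g) = smult c f - smult c g"
  by (auto simp: smult_def algebra_simps intro!: ext)

lemma smult_sum: "smult c (\<Sum>x\<in>S. f x) = (\<Sum>x\<in>S. smult c (f x))"
  by (auto simp: smult_def sum_fun_apply sum_distrib_left intro!: ext)

lemma gmul_smult_left: "gmul (smult c f) g = smult c (gmul f g)"
  by (auto simp: gmul_def smult_def sum_distrib_left intro!: ext sum.cong)

lemma gmul_smult_right: "gmul f (smult c g) = smult c (gmul f g)"
  by (auto simp: gmul_def smult_def sum_distrib_left intro!: ext sum.cong)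

lemma gmul_mono_mono:
  "gmul (mono S) (mono T) =
     (if finite S \<and> finite T \<and> S \<inter> T = {} then smult (gsign S T) (mono (S \<union> T)) else (\<lambda>_. 0))"
proof (rule ext)
  fix U :: "('a \<times> bool) set"
  show "gmul (mono S) (mono T) U =
    (if finite S \<and> finite T \<and> S \<inter> T = {} then smult (gsign S T) (mono (S \<union> T)) else (\<lambda>_. 0)) U"
  proof (cases "finite U")
    case True
    have "(\<Sum>S'\<in>Pow U. gsign S' (U - S') * mono S S' * mono T (U - S'))
        = (\<Sum>S'\<in>Pow U. if S' = S then gsign S (U - S) * mono T (U - S) else 0)"
      by (rule sum.cong) (auto simp: mono_def)
    also have "\<dots> = (if S \<subseteq> U then gsign S (U - S) * mono T (U - S) else 0)"
      using True by (simp add: sum.delta')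
    finally show ?thesis using True
      by (auto simp: gmul_def smult_def mono_def intro: finite_subset)
  qed (auto simp: gmul_def smult_def mono_def)
qed

abbreviation site :: "'a \<Rightarrow> ('a \<times> bool) set" where
  "site i \<equiv> {(i, False), (i, True)}"

lemma gsign_empty [simp]: "gsign S {} = 1" "gsign {} S = 1"
  by (auto simp: gsign_def)

lemma gsign_psibar_psi_same: "gsign {(i, True)} {(i, False)} = -1"
proof -
  have "{(s, t). s \<in> {(i, True)} \<and> t \<in> {(i, False)} \<and> gless t s} = {((i, True), (i, False))}"
    by auto
  then show ?thesis by (simp add: gsign_def)
qed

text \<open>The pair at a site is an even element: every generator outside the site passes either
both or none of its two generators, contributing an even number of inversions.\<close>

lemma gsign_site_left:
  assumes "W \<inter> site i = {}"
  shows "gsign (site i) W = 1"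
proof -
  have "{(s, t). s \<in> site i \<and> t \<in> W \<and> gless t s} = site i \<times> {t\<in>W. fst t < i}"
    using assms by (auto simp: neq_iff)
  then show ?thesis by (simp add: gsign_def card_cartesian_product power_mult)
qed

lemma gsign_site_right:
  assumes "W \<inter> site i = {}"
  shows "gsign W (site i) = 1"
proof -
  have "{(s, t). s \<in> W \<and> t \<in> site i \<and> gless t s} = {s\<in>W. i < fst s} \<times> site i"
    using assms by (auto simp: neq_iff)
  then show ?thesis by (simp add: gsign_def card_cartesian_product power_mult mult.commute)
qed

lemma gsign_union_site:
  assumes "finite S" "finite T" "S \<inter> site i = {}" "T \<inter> site i = {}"
  shows "gsign S (T \<union> site i) = gsign S T"
proof -
  let ?X = "{(s, t). s \<in> S \<and> t \<in> T \<and> gless t s}"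
  let ?Y = "{s\<in>S. i < fst s} \<times> site i"
  have split: "{(s, t). s \<in> S \<and> t \<in> T \<union> site i \<and> gless t s} = ?X \<union> ?Y"
    using assms(3) by (auto simp: neq_iff)
  have "finite ?X" by (rule finite_subset[of _ "S \<times> T"]) (use assms in auto)
  moreover have "finite ?Y" "?X \<inter> ?Y = {}" using assms by auto
  ultimately have "card (?X \<union> ?Y) = card ?X + 2 * card {s\<in>S. i < fst s}"
    by (simp add: card_Un_disjoint card_cartesian_product)
  then show ?thesis unfolding gsign_def split by (simp add: power_add power_mult)
qed

lemma gmul_psibar_psi:
  "gmul (psibar j) (psi k) = smult (gsign {(j, True)} {(k, False)}) (mono {(j, True), (k, False)})"
  by (simp add: psibar_def psi_def gmul_mono_mono insert_commute)

lemma gmul_psibar_psi_same: "gmul (psibar i) (psi i) = smult (-1) (mono (site i))"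
  by (simp add: gmul_psibar_psi gsign_psibar_psi_same insert_commute)

lemma gexp_psibar_psi:
  "gexp (smult t (gmul (psibar i) (psi i))) = gone - smult t (mono (site i))"
proof -
  define x where "x = smult t (gmul (psibar i) (psi i))"
  have x: "x = smult (-t) (mono (site i))"
    by (simp add: x_def gmul_psibar_psi_same smult_smult)
  have x0: "x {} = 0" and x_upd: "x({} := 0) = x"
    by (auto simp: x smult_def mono_def)
  have pow1: "gpow x 1 = x"
    by (simp add: gpow_def gone_def x gmul_smult_left gmul_mono_mono smult_smult)
  have "gpow x 2 = gmul x x"
    using pow1 by (simp add: gpow_def numeral_2_eq_2)
  also have "\<dots> = 0"
    unfolding x gmul_smult_left gmul_smult_right gmul_mono_mono by (simp add: smult_def zero_fun_def)
  finally have pow2: "gpow x 2 = 0" .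
  show ?thesis
  proof (cases "t = 0")
    case True
    then have "gens x = {}" by (simp add: gens_def x smult_def)
    then show ?thesis unfolding x_def[symmetric] gexp_def x0
      using True by (auto simp: gpow_def smult_def)
  next
    case False
    then have "card (gens x) = 2" by (auto simp: gens_def x smult_def mono_def)
    then have "gexp x = smult 1 (smult 1 (gpow x 0) + smult 1 (gpow x 1) + smult (1/2) (gpow x 2))"
      unfolding gexp_def x0 x_upd by (simp add: numeral_2_eq_2 atMost_Suc add_ac)
    then show ?thesis unfolding x_def[symmetric] pow1 pow2
      by (auto simp: gpow_def x smult_def intro!: ext)
  qed
qed

lemma gmul_gone_minus_site:
  "gmul (gone - smult t (mono (site i))) F =
     (\<lambda>U. if finite U
          then F U - t * (if site i \<subseteq> U then gsign (site i) (U - site i) * F (U - site i) else 0)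
          else 0)"
proof (rule ext)
  fix U :: "('a \<times> bool) set"
  show "gmul (gone - smult t (mono (site i))) F U =
    (if finite U
     then F U - t * (if site i \<subseteq> U then gsign (site i) (U - site i) * F (U - site i) else 0)
     else 0)"
  proof (cases "finite U")
    case True
    have "(\<Sum>S\<in>Pow U. gsign S (U - S) * (gone - smult t (mono (site i))) S * F (U - S))
       = (\<Sum>S\<in>Pow U. (if S = {} then F U else 0)
            + (if S = site i then - t * (gsign (site i) (U - site i) * F (U - site i)) else 0))"
      by (rule sum.cong) (auto simp: gone_def smult_def mono_def)
    also have "\<dots> = F U - t * (if site i \<subseteq> U then gsign (site i) (U - site i) * F (U - site i) else 0)"
      using True by (simp add: sum.distrib sum.delta')
    finally show ?thesis using True by (simp add: gmul_def)
  qed (simp add: gmul_def)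
qed

definition berezin_weighted :: "'a::linorder \<Rightarrow> complex \<Rightarrow> 'a grass \<Rightarrow> 'a grass" where
  "berezin_weighted i t F =
     (\<lambda>W. if finite W \<and> W \<inter> site i = {} then t * F W - F (W \<union> site i) else 0)"

lemma berezin_gexp_psibar_psi:
  "berezin i (gmul (gexp (smult t (gmul (psibar i) (psi i)))) F) = berezin_weighted i t F"
proof (rule ext)
  fix W :: "('a \<times> bool) set"
  show "berezin i (gmul (gexp (smult t (gmul (psibar i) (psi i)))) F) W = berezin_weighted i t F W"
  proof (cases "finite W \<and> W \<inter> site i = {}")
    case True
    then have disj: "W \<inter> site i = {}" by auto
    have "gmul (mono W) (gmul (psibar i) (psi i)) (W \<union> site i) = -1"
      unfolding gmul_psibar_psi_same gmul_smult_right gmul_mono_mono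
      using True by (simp add: smult_def mono_def gsign_site_right)
    moreover have "W \<union> site i - site i = W" using disj by auto
    ultimately show ?thesis using True
      by (auto simp: berezin_def berezin_weighted_def gexp_psibar_psi gmul_gone_minus_site
          gsign_site_left[OF disj] insert_commute algebra_simps)
  qed (auto simp: berezin_def berezin_weighted_def gexp_psibar_psi gmul_gone_minus_site)
qed

lemma berezin_weighted_add: "berezin_weighted i t (f + g) = berezin_weighted i t f + berezin_weighted i t g"
  by (auto simp: berezin_weighted_def algebra_simps intro!: ext)

lemma berezin_weighted_diff: "berezin_weighted i t (f - g) = berezin_weighted i t f - berezin_weighted i t g"
  by (auto simp: berezin_weighted_def algebra_simps intro!: ext)

lemma berezin_weighted_smult: "berezin_weighted i t (smult c f) = smult c (berezin_weighted i t f)"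
  by (auto simp: berezin_weighted_def smult_def algebra_simps intro!: ext)

lemma berezin_weighted_sum:
  "berezin_weighted i t (\<Sum>x\<in>S. f x) = (\<Sum>x\<in>S. berezin_weighted i t (f x))"
  by (auto simp: berezin_weighted_def sum_fun_apply sum_distrib_left sum_subtractf intro!: ext)

lemma berezin_weighted_mono_full:
  assumes "finite Z" "site i \<subseteq> Z"
  shows "berezin_weighted i t (smult c (mono Z)) = smult (-c) (mono (Z - site i))"
proof (rule ext)
  fix W :: "('a \<times> bool) set"
  have "(W \<union> site i = Z \<and> W \<inter> site i = {}) = (W = Z - site i)" using assms by auto
  moreover have "W \<inter> site i = {} \<Longrightarrow> W \<noteq> Z" using assms by auto
  ultimately show "berezin_weighted i t (smult c (mono Z)) W = smult (-c) (mono (Z - site i)) W"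
    using assms by (auto simp: berezin_weighted_def smult_def mono_def)
qed

lemma berezin_weighted_mono_empty:
  assumes "finite Z" "Z \<inter> site i = {}"
  shows "berezin_weighted i t (smult c (mono Z)) = smult (t * c) (mono Z)"
proof (rule ext)
  fix W :: "('a \<times> bool) set"
  have "W \<union> site i \<noteq> Z" using assms by auto
  then show "berezin_weighted i t (smult c (mono Z)) W = smult (t * c) (mono Z) W"
    using assms by (auto simp: berezin_weighted_def smult_def mono_def)
qed

lemma berezin_weighted_mono_half:
  assumes "Z \<inter> site i \<noteq> {}" "\<not> site i \<subseteq> Z"
  shows "berezin_weighted i t (smult c (mono Z)) = 0"
  using assms by (auto simp: berezin_weighted_def smult_def mono_def intro!: ext)

lemma foldr_psibar_psi_sorted:
  assumes "sorted_wrt (<) xs"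
  shows "foldr (\<lambda>j acc. gmul (gmul (psibar j) (psi j)) acc) xs gone
         = smult ((-1) ^ length xs) (mono (set xs \<times> UNIV))"
  using assms
proof (induction xs)
  case Nil
  then show ?case by (simp add: gone_def smult_def)
next
  case (Cons x xs)
  have disj: "set xs \<times> UNIV \<inter> site x = {}" using Cons.prems by auto
  have "site x \<union> set xs \<times> UNIV = set (x # xs) \<times> UNIV"
    by (auto simp: UNIV_bool)
  then show ?case
    using Cons disj
    by (simp add: gmul_psibar_psi_same gmul_smult_left gmul_smult_right gmul_mono_mono
        gsign_site_left smult_smult insert_commute Int_commute)
qed

lemma tau_eq_mono:
  assumes "finite A"
  shows "tau A = smult ((-1) ^ card A) (mono (A \<times> UNIV))"
  unfolding tau_def using foldr_psibar_psi_sorted[of "sorted_list_of_set A"] assms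
  by (simp add: sorted_list_of_set.length_sorted_key_list_of_set)

definition hop :: "'a::linorder \<Rightarrow> 'a \<Rightarrow> 'a set \<Rightarrow> 'a grass" where
  "hop j k B = gmul (gmul (psibar j) (psi k)) (tau B)"

lemma hop_eq_mono:
  assumes "finite B" "j \<notin> B" "k \<notin> B"
  shows "hop j k B =
    smult (gsign {(j, True)} {(k, False)} * (-1) ^ card B * gsign {(j, True), (k, False)} (B \<times> UNIV))
      (mono ({(j, True), (k, False)} \<union> B \<times> UNIV))"
  using assms
  by (simp add: hop_def tau_eq_mono gmul_psibar_psi gmul_smult_left gmul_smult_right
      gmul_mono_mono smult_smult mult_ac)

lemma minus_one_power_card_Diff_singleton:
  assumes "finite B" "i \<in> B"
  shows "(-1::complex) ^ card B = - ((-1) ^ card (B - {i}))"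
  using assms by (cases "card B") (auto simp: card_Diff_singleton)

lemma berezin_weighted_tau_mem:
  assumes "finite B" "i \<in> B"
  shows "berezin_weighted i t (tau B) = tau (B - {i})"
proof -
  have "site i \<subseteq> B \<times> UNIV" using assms by auto
  moreover have "B \<times> UNIV - site i = (B - {i}) \<times> UNIV" by (auto simp: UNIV_bool)
  ultimately show ?thesis
    using assms by (simp add: tau_eq_mono berezin_weighted_mono_full minus_one_power_card_Diff_singleton)
qed

lemma berezin_weighted_tau_not_mem:
  assumes "finite B" "i \<notin> B"
  shows "berezin_weighted i t (tau B) = smult t (tau B)"
  using assms by (simp add: tau_eq_mono berezin_weighted_mono_empty smult_smult)

lemma berezin_weighted_hop_not_mem:
  assumes "finite B" "i \<notin> B" "j \<notin> B" "k \<notin> B" "j \<noteq> i" "k \<noteq> i"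
  shows "berezin_weighted i t (hop j k B) = smult t (hop j k B)"
  using assms by (simp add: hop_eq_mono berezin_weighted_mono_empty smult_smult)

lemma berezin_weighted_hop_end:
  assumes "finite B" "i \<notin> B" "j \<notin> B" "k \<notin> B" "j \<noteq> k" "j = i \<or> k = i"
  shows "berezin_weighted i t (hop j k B) = 0"
  using assms by (auto simp: hop_eq_mono intro!: berezin_weighted_mono_half)

lemma berezin_weighted_hop_mem:
  assumes "finite B" "i \<in> B" "j \<notin> B" "k \<notin> B" "j \<noteq> i" "k \<noteq> i"
  shows "berezin_weighted i t (hop j k B) = hop j k (B - {i})"
proof -
  let ?Y = "{(j, True), (k, False)}"
  have B: "B \<times> UNIV = (B - {i}) \<times> UNIV \<union> site i" using assms by (auto simp: UNIV_bool)
  have "gsign ?Y (B \<times> UNIV) = gsign ?Y ((B - {i}) \<times> UNIV)"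
    unfolding B using assms by (intro gsign_union_site) auto
  moreover have "site i \<subseteq> ?Y \<union> B \<times> UNIV" using assms by auto
  moreover have "?Y \<union> B \<times> UNIV - site i = ?Y \<union> (B - {i}) \<times> UNIV"
    using assms by (auto simp: UNIV_bool)
  ultimately show ?thesis
    using assms by (simp add: hop_eq_mono berezin_weighted_mono_full minus_one_power_card_Diff_singleton)
qed

abbreviation off_diag :: "'a set \<Rightarrow> ('a \<times> 'a) set" where
  "off_diag A \<equiv> {(j, k). j \<in> A \<and> k \<in> A \<and> j \<noteq> k}"

lemma fA_eq_hop:
  "fA lam A = smult (lam * (1 - of_nat (card A))) (tau A) + (\<Sum>j\<in>A. tau (A - {j}))
     - (\<Sum>(j, k)\<in>off_diag A. hop j k (A - {j, k}))"
  unfolding fA_def hop_def ..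

lemma berezin_weighted_fA:
  "berezin_weighted i t (fA lam A) =
     smult (lam * (1 - of_nat (card A))) (berezin_weighted i t (tau A))
     + (\<Sum>j\<in>A. berezin_weighted i t (tau (A - {j})))
     - (\<Sum>(j, k)\<in>off_diag A. berezin_weighted i t (hop j k (A - {j, k})))"
  unfolding fA_eq_hop berezin_weighted_add berezin_weighted_diff berezin_weighted_smult
    berezin_weighted_sum
  by (simp add: case_prod_beta')

lemma berezin_weighted_fA_not_mem:
  assumes "finite A" "i \<notin> A"
  shows "berezin_weighted i t (fA lam A) = smult t (fA lam A)"
proof -
  have "(\<Sum>j\<in>A. berezin_weighted i t (tau (A - {j}))) = (\<Sum>j\<in>A. smult t (tau (A - {j})))"
    using assms by (intro sum.cong) (auto intro: berezin_weighted_tau_not_mem)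
  moreover have "(\<Sum>(j, k)\<in>off_diag A. berezin_weighted i t (hop j k (A - {j, k})))
      = (\<Sum>(j, k)\<in>off_diag A. smult t (hop j k (A - {j, k})))"
    using assms by (intro sum.cong) (auto intro!: berezin_weighted_hop_not_mem)
  ultimately have "berezin_weighted i t (fA lam A) =
      smult (lam * (1 - of_nat (card A))) (smult t (tau A)) + (\<Sum>j\<in>A. smult t (tau (A - {j})))
      - (\<Sum>(j, k)\<in>off_diag A. smult t (hop j k (A - {j, k})))"
    unfolding berezin_weighted_fA using assms by (simp add: berezin_weighted_tau_not_mem)
  also have "\<dots> = smult t (fA lam A)"
    unfolding fA_eq_hop[of lam A]
    by (simp add: smult_add smult_diff smult_sum smult_smult mult.commute case_prod_unfold)
  finally show ?thesis .
qed

lemma berezin_weighted_tau_sum_mem: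
  assumes "finite A" "i \<in> A"
  shows "(\<Sum>j\<in>A. berezin_weighted i t (tau (A - {j})))
    = smult t (tau (A - {i})) + (\<Sum>j\<in>A - {i}. tau (A - {i} - {j}))"
proof -
  have "(\<Sum>j\<in>A. berezin_weighted i t (tau (A - {j})))
      = berezin_weighted i t (tau (A - {i})) + (\<Sum>j\<in>A - {i}. berezin_weighted i t (tau (A - {j})))"
    using assms by (rule sum.remove)
  also have "(\<Sum>j\<in>A - {i}. berezin_weighted i t (tau (A - {j}))) = (\<Sum>j\<in>A - {i}. tau (A - {i} - {j}))"
  proof (rule sum.cong)
    fix j assume "j \<in> A - {i}"
    then have "berezin_weighted i t (tau (A - {j})) = tau (A - {j} - {i})"
      using assms by (intro berezin_weighted_tau_mem) auto
    also have "A - {j} - {i} = A - {i} - {j}" by auto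
    finally show "berezin_weighted i t (tau (A - {j})) = tau (A - {i} - {j})" .
  qed simp
  also have "berezin_weighted i t (tau (A - {i})) = smult t (tau (A - {i}))"
    using assms by (simp add: berezin_weighted_tau_not_mem)
  finally show ?thesis .
qed

text \<open>Only the pairs avoiding \<open>i\<close> survive: a term with \<open>j = i\<close> or \<open>k = i\<close> contains just one
generator of the site.\<close>

lemma berezin_weighted_hop_sum_mem:
  assumes "finite A" "i \<in> A"
  shows "(\<Sum>(j, k)\<in>off_diag A. berezin_weighted i t (hop j k (A - {j, k})))
    = (\<Sum>(j, k)\<in>off_diag (A - {i}). hop j k (A - {i} - {j, k}))"
proof (rule sum.mono_neutral_cong_right)
  show "finite (off_diag A)"
    by (rule finite_subset[of _ "A \<times> A"]) (use assms in auto)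
  show "off_diag (A - {i}) \<subseteq> off_diag A" by auto
  show "\<forall>p\<in>off_diag A - off_diag (A - {i}).
          (case p of (j, k) \<Rightarrow> berezin_weighted i t (hop j k (A - {j, k}))) = 0"
    using assms by (auto intro!: berezin_weighted_hop_end)
  fix p assume "p \<in> off_diag (A - {i})"
  moreover have "\<And>j k. A - {j, k} - {i} = A - {i} - {j, k}" by auto
  ultimately show "(case p of (j, k) \<Rightarrow> berezin_weighted i t (hop j k (A - {j, k})))
      = (case p of (j, k) \<Rightarrow> hop j k (A - {i} - {j, k}))"
    using assms by (auto simp: berezin_weighted_hop_mem)
qed

lemma berezin_weighted_fA_mem:
  assumes "finite A" "i \<in> A"
  shows "berezin_weighted i t (fA lam A) = fA lam (A - {i}) + smult (t - lam) (tau (A - {i}))"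
proof -
  have "card A = Suc (card (A - {i}))"
    using assms by (metis card_Suc_Diff1)
  then show ?thesis
    using assms
    unfolding berezin_weighted_fA berezin_weighted_tau_sum_mem[OF assms]
      berezin_weighted_hop_sum_mem[OF assms] fA_eq_hop[of lam "A - {i}"]
    by (auto simp: berezin_weighted_tau_mem smult_def algebra_simps intro!: ext)
qed

theorem lemma5p1:
  fixes V A :: "'a::linorder set" and i :: 'a and t lam :: complex
  assumes "finite V" and "A \<subseteq> V" and "i \<in> V"
  shows "(berezin i (gmul (gexp (smult t (gmul (psibar i) (psi i)))) (tau A))
           = (if i \<in> A then tau (A - {i}) else smult t (tau A)))
         \<and> (berezin i (gmul (gexp (smult t (gmul (psibar i) (psi i)))) (fA lam A))
           = (if i \<in> A then fA lam (A - {i}) + smult (t - lam) (tau (A - {i}))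
              else smult t (fA lam A)))"
proof -
  have "finite A" using assms finite_subset by blast
  then show ?thesis
    by (simp add: berezin_gexp_psibar_psi berezin_weighted_tau_mem berezin_weighted_tau_not_mem
        berezin_weighted_fA_mem berezin_weighted_fA_not_mem)
qed

end
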